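(* Let $\zeta_5$ be a primitive fifth root of unity. Then \begin{align*} \frac{(q^2;q^2)_\infty}{(q,\zeta_5q^2,\zeta_5^{-1}q^2;q^2)_\infty}&=\frac{(q^{25};q^{25})_\infty[q^{20};q^{50}]_\infty}{[q^{10};q^{25}]_\infty[q^{10};q^{50}]_\infty}+(\zeta_5+\zeta_5^4)q^5\frac{(q^{50};q^{50})_\infty}{(q^{25};q^{50})_\infty[q^{20};q^{50}]_\infty}+q\frac{(q^{25};q^{25})_\infty}{[q^5;q^{25}]_\infty}\\ &\quad+(\zeta_5+\zeta_5^4)q^2\frac{(q^{25};q^{25})_\infty}{[q^{10};q^{25}]_\infty}+(\zeta_5+\zeta_5^4)q^3\frac{(q^{25};q^{25})_\infty[q^{10};q^{50}]_\infty}{[q^5;q^{25}]_\infty[q^{20};q^{50}]_\infty}+q^3\frac{(q^{50};q^{50})_\infty}{(q^{25};q^{50})_\infty[q^{10};q^{50}]_\infty}. \end{align*}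
   Context: Notation ($|q|<1$): $(z;q)_\infty=\prod_{j\ge0}(1-zq^j)$, $(z_1,\dots,z_k;q)_\infty=(z_1;q)_\infty\cdots(z_k;q)_\infty$, $[z;q]_\infty=(z;q)_\infty(q/z;q)_\infty$. *)

theory Defs
  imports "HOL-Analysis.Analysis"
begin

definition qpoch_inf :: "complex \<Rightarrow> complex \<Rightarrow> complex" where
  "qpoch_inf z q = (\<Prod>j. (1 - z * q ^ j))"

text \<open>Theta-type product [z;q]_\<infinity> = (z;q)_\<infinity> (q/z;q)_\<infinity>.\<close>
definition qtheta_inf :: "complex \<Rightarrow> complex \<Rightarrow> complex" where
  "qtheta_inf z q = qpoch_inf z q * qpoch_inf (q / z) q"

end

theory Submission
  imports Defs
begin

(*
  Write psi(q) = (q^2;q^2)_inf / (q;q^2)_inf.  The left-hand side is psi(q) times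
  1 / ((zeta q^2;q^2)_inf (zeta^-1 q^2;q^2)_inf), and since the five products
  (zeta^i q^2;q^2)_inf multiply to (q^10;q^10)_inf, the second factor equals
  (zeta^2 q^2, zeta^3 q^2, q^2;q^2)_inf / (q^10;q^10)_inf.

  Both 2 psi(q) = [-q;q]_inf (q;q)_inf and (1 - zeta^2)(zeta^2 q^2, zeta^3 q^2, q^2;q^2)_inf
  = [zeta^2;q^2]_inf (q^2;q^2)_inf are Jacobi triple products, i.e. theta series
  sum_n q^(n(n-1)/2) x^n over all integers n.  Splitting n by its residue r in {-2,...,2}
  modulo 5 turns each residue class back into a triple product, with base q^25 resp. q^50.
  This gives 5-dissections of psi(q) (three terms) and of (zeta^2 q^2, zeta^3 q^2, q^2;q^2)_inf
  (two terms: the class r = -2 contributes [1;q^50]_inf = 0, and the remaining zeta-dependence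
  collapses to zeta + zeta^4); multiplying them out gives the six terms.

  The triple product identity itself is obtained, following Cauchy, from the finite
  q-binomial theorem by letting the number of factors tend to infinity (Tannery's theorem).
*)

section \<open>q-Pochhammer symbols\<close>

definition qpoch :: "complex \<Rightarrow> complex \<Rightarrow> nat \<Rightarrow> complex" where
  "qpoch z q n = (\<Prod>j<n. 1 - z * q ^ j)"

lemma convergent_prod_one_minus_geometric:
  fixes z q :: "'a::{real_normed_field,banach}"
  assumes "norm q < 1"
  shows "convergent_prod (\<lambda>j. 1 - z * q ^ j)"
proof -
  have "summable (\<lambda>j. norm z * norm q ^ j)"
    using assms by (intro summable_mult summable_geometric) simp
  then have "summable (\<lambda>j. norm ((1 - z * q ^ j) - 1))"
    by (simp add: norm_mult norm_power)
  then show ?thesis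
    by (intro abs_convergent_prod_imp_convergent_prod summable_imp_abs_convergent_prod)
qed

lemma qpoch_LIMSEQ:
  assumes "norm q < 1"
  shows "(\<lambda>n. qpoch z q n) \<longlonglongrightarrow> qpoch_inf z q"
proof -
  have "(\<lambda>n. \<Prod>j<Suc n. 1 - z * q ^ j) \<longlonglongrightarrow> qpoch_inf z q"
    using convergent_prod_LIMSEQ[OF convergent_prod_one_minus_geometric[OF assms]]
    by (simp add: qpoch_inf_def lessThan_Suc_atMost)
  then show ?thesis
    unfolding qpoch_def by (rule LIMSEQ_imp_Suc)
qed

lemma qpoch_inf_eqI:
  assumes "norm q < 1" and "(\<lambda>n. qpoch z q n) \<longlonglongrightarrow> L"
  shows "qpoch_inf z q = L"
  using LIMSEQ_unique[OF qpoch_LIMSEQ[OF assms(1)] assms(2)] .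

lemma norm_power_less_one: "norm (q::'a::real_normed_div_algebra) < 1 \<Longrightarrow> 0 < k \<Longrightarrow> norm (q ^ k) < 1"
  by (simp add: norm_power power_less_one_iff)

lemma qpoch_inf_nonzero:
  assumes "norm q < 1" and "norm z < 1"
  shows "qpoch_inf z q \<noteq> 0"
  unfolding qpoch_inf_def
proof (rule prodinf_nonzero[OF convergent_prod_one_minus_geometric[OF assms(1)]])
  fix j
  have "norm (z * q ^ j) \<le> norm z"
    using assms by (simp add: norm_mult norm_power mult_left_le power_le_one)
  with assms(2) show "1 - z * q ^ j \<noteq> 0"
    by auto
qed

lemma qpoch_inf_shift:
  assumes "norm q < 1"
  shows "qpoch_inf z q = (1 - z) * qpoch_inf (z * q) q"
proof (rule qpoch_inf_eqI[OF assms])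
  have "qpoch z q (Suc n) = (1 - z) * qpoch (z * q) q n" for n
    unfolding qpoch_def by (subst prod.lessThan_Suc_shift) (simp add: ac_simps)
  moreover have "(\<lambda>n. (1 - z) * qpoch (z * q) q n) \<longlonglongrightarrow> (1 - z) * qpoch_inf (z * q) q"
    by (intro tendsto_intros qpoch_LIMSEQ[OF assms])
  ultimately have "(\<lambda>n. qpoch z q (Suc n)) \<longlonglongrightarrow> (1 - z) * qpoch_inf (z * q) q"
    by simp
  then show "(\<lambda>n. qpoch z q n) \<longlonglongrightarrow> (1 - z) * qpoch_inf (z * q) q"
    by (rule LIMSEQ_imp_Suc)
qed

lemma qpoch_inf_one: "norm q < 1 \<Longrightarrow> qpoch_inf 1 q = 0"
  using qpoch_inf_shift[of q 1] by simp

lemma qpoch_inf_zero_base: "qpoch_inf z 0 = 1 - z"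
  using qpoch_inf_shift[of 0 z] by (simp add: qpoch_inf_def)

lemma qpoch_inf_minus_mult:
  assumes "norm q < 1"
  shows "qpoch_inf (-a) q * qpoch_inf a q = qpoch_inf (a^2) (q^2)"
proof -
  have "qpoch (-a) q n * qpoch a q n = qpoch (a^2) (q^2) n" for n
    by (simp add: qpoch_def prod.distrib[symmetric] power2_eq_square power_mult_distrib
        algebra_simps flip: power_mult)
  moreover have "(\<lambda>n. qpoch (-a) q n * qpoch a q n) \<longlonglongrightarrow> qpoch_inf (-a) q * qpoch_inf a q"
    by (intro tendsto_intros qpoch_LIMSEQ[OF assms])
  ultimately show ?thesis
    by (intro qpoch_inf_eqI[symmetric] norm_power_less_one assms) auto
qed

lemma prod_lessThan_mult:
  fixes f :: "nat \<Rightarrow> 'a::comm_monoid_mult"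
  shows "(\<Prod>j<n * k. f j) = (\<Prod>m<n. \<Prod>r<k. f (m * k + r))"
  unfolding prod.nat_group[of f k n, symmetric]
  by (simp add: prod.atLeastLessThan_shift_0[of _ "m * k" for m] atLeast0LessThan o_def)

lemma qpoch_inf_split:
  assumes "norm q < 1" and "0 < k"
  shows "qpoch_inf a q = (\<Prod>r<k. qpoch_inf (a * q^r) (q^k))"
proof -
  have "qpoch a q (n * k) = (\<Prod>r<k. qpoch (a * q^r) (q^k) n)" for n
  proof -
    have "qpoch a q (n * k) = (\<Prod>m<n. \<Prod>r<k. 1 - a * q ^ (m * k + r))"
      unfolding qpoch_def by (rule prod_lessThan_mult)
    also have "\<dots> = (\<Prod>r<k. qpoch (a * q^r) (q^k) n)"
      unfolding qpoch_def by (subst prod.swap) (simp add: power_add ac_simps flip: power_mult)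
    finally show ?thesis .
  qed
  moreover have "(\<lambda>n. qpoch a q (n * k)) \<longlonglongrightarrow> qpoch_inf a q"
  proof -
    have "strict_mono (\<lambda>n. n * k)"
      using assms(2) by (intro strict_monoI) simp
    then show ?thesis
      using LIMSEQ_subseq_LIMSEQ[OF qpoch_LIMSEQ[OF assms(1)]] by (simp add: o_def)
  qed
  moreover have "(\<lambda>n. \<Prod>r<k. qpoch (a * q^r) (q^k) n) \<longlonglongrightarrow> (\<Prod>r<k. qpoch_inf (a * q^r) (q^k))"
    using assms by (intro tendsto_prod qpoch_LIMSEQ norm_power_less_one)
  ultimately show ?thesis
    using LIMSEQ_unique by simp
qed

lemma qpoch_inf_self_dissect5:
  assumes "norm a < 1" and "a \<noteq> 0"
  shows "qpoch_inf a a = qtheta_inf a (a^5) * qtheta_inf (a^2) (a^5) * qpoch_inf (a^5) (a^5)"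
proof -
  have "a^5 / a = a^4" "a^5 / a^2 = a^3"
    using assms(2) by (simp_all add: divide_simps eval_nat_numeral)
  then show ?thesis
    using qpoch_inf_split[OF assms(1), of 5 a]
    by (simp add: qtheta_inf_def numeral_eq_Suc ac_simps)
qed

lemma cyclotomic5_sum:
  fixes \<zeta> :: "'a::idom"
  assumes "\<zeta>^5 = 1" and "\<zeta> \<noteq> 1"
  shows "1 + \<zeta> + \<zeta>^2 + \<zeta>^3 + \<zeta>^4 = 0"
proof -
  have "(\<zeta> - 1) * (1 + \<zeta> + \<zeta>^2 + \<zeta>^3 + \<zeta>^4) = \<zeta>^5 - 1"
    by (simp add: algebra_simps eval_nat_numeral)
  with assms show ?thesis
    by simp
qed

lemma qpoch_inf_fifth_roots:
  assumes "norm Q < 1" and "\<zeta>^5 = 1" and "\<zeta> \<noteq> 1"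
  shows "(\<Prod>i<5. qpoch_inf (\<zeta>^i * a) Q) = qpoch_inf (a^5) (Q^5)"
proof (rule sym, rule qpoch_inf_eqI)
  have roots: "(\<Prod>i<5. 1 - \<zeta>^i * y) = 1 - y^5" for y
    using cyclotomic5_sum[OF assms(2,3)] assms(2)
    by (simp add: numeral_eq_Suc) algebra
  have "(\<Prod>i<5. qpoch (\<zeta>^i * a) Q n) = (\<Prod>j<n. \<Prod>i<5. 1 - \<zeta>^i * (a * Q^j))" for n
    unfolding qpoch_def by (subst prod.swap) (simp add: mult.assoc)
  also have "\<dots> n = qpoch (a^5) (Q^5) n" for n
    unfolding roots qpoch_def by (simp add: power_mult_distrib mult.commute flip: power_mult)
  finally have "qpoch (a^5) (Q^5) n = (\<Prod>i<5. qpoch (\<zeta>^i * a) Q n)" for n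
    by simp
  moreover have "(\<lambda>n. \<Prod>i<5. qpoch (\<zeta>^i * a) Q n) \<longlonglongrightarrow> (\<Prod>i<5. qpoch_inf (\<zeta>^i * a) Q)"
    by (intro tendsto_prod qpoch_LIMSEQ assms)
  ultimately show "(\<lambda>n. qpoch (a^5) (Q^5) n) \<longlonglongrightarrow> (\<Prod>i<5. qpoch_inf (\<zeta>^i * a) Q)"
    by simp
qed (simp add: assms norm_power_less_one)

lemma qtheta_inf_one: "norm q < 1 \<Longrightarrow> qtheta_inf 1 q = 0"
  by (simp add: qtheta_inf_def qpoch_inf_one)

lemma qtheta_inf_nonzero:
  assumes "norm q < 1" "norm z < 1" "norm (q / z) < 1"
  shows "qtheta_inf z q \<noteq> 0"
  using assms by (simp add: qtheta_inf_def qpoch_inf_nonzero)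

lemma qtheta_inf_reflect: "q \<noteq> 0 \<Longrightarrow> z \<noteq> 0 \<Longrightarrow> qtheta_inf (q / z) q = qtheta_inf z q"
  by (simp add: qtheta_inf_def)

lemma qtheta_inf_minus_mult:
  assumes "norm q < 1"
  shows "qtheta_inf (-a) q * qtheta_inf a q = qtheta_inf (a^2) (q^2)"
proof -
  have "qtheta_inf (-a) q * qtheta_inf a q
      = (qpoch_inf (-a) q * qpoch_inf a q) * (qpoch_inf (- (q / a)) q * qpoch_inf (q / a) q)"
    by (simp add: qtheta_inf_def ac_simps)
  then show ?thesis
    by (simp add: qpoch_inf_minus_mult[OF assms] qtheta_inf_def power_divide)
qed

lemma qtheta_inf_minus:
  assumes "norm q < 1" and "qtheta_inf a q \<noteq> 0"
  shows "qtheta_inf (-a) q = qtheta_inf (a^2) (q^2) / qtheta_inf a q"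
  using qtheta_inf_minus_mult[OF assms(1), of a] assms(2) by (simp add: field_simps)

lemma ramanujan_psi_eq_qtheta:
  assumes "norm q < 1" and "q \<noteq> 0"
  shows "2 * (qpoch_inf (q^2) (q^2) / qpoch_inf q (q^2)) = qtheta_inf (-q) q * qpoch_inf q q"
proof -
  have q2: "norm (q^2) < 1"
    using assms by (simp add: norm_power_less_one)
  have "qpoch_inf (-1) q = 2 * qpoch_inf (-q) q"
    using qpoch_inf_shift[OF assms(1), of "-1"] by simp
  then have theta: "qtheta_inf (-q) q = 2 * qpoch_inf (-q) q ^ 2"
    using assms(2) by (simp add: qtheta_inf_def power2_eq_square)
  have euler: "qpoch_inf (-q) q * qpoch_inf q q = qpoch_inf (q^2) (q^2)"
    using qpoch_inf_minus_mult[OF assms(1)] .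
  have split: "qpoch_inf q q = qpoch_inf q (q^2) * qpoch_inf (q^2) (q^2)"
    using qpoch_inf_split[OF assms(1), of 2 q] by (simp add: numeral_2_eq_2)
  have "qpoch_inf (q^2) (q^2) \<noteq> 0"
    using q2 by (intro qpoch_inf_nonzero)
  with euler split have "qpoch_inf (-q) q * qpoch_inf q (q^2) = 1"
    by (metis mult.assoc mult.left_commute mult_cancel_right2)
  then have "qpoch_inf (-q) q = 1 / qpoch_inf q (q^2)"
    by (metis nonzero_eq_divide_eq mult_zero_right zero_neq_one)
  moreover have "qtheta_inf (-q) q * qpoch_inf q q = 2 * qpoch_inf (q^2) (q^2) * qpoch_inf (-q) q"
    using theta euler by (simp add: power2_eq_square ac_simps)
  ultimately show ?thesis
    by simp
qed

section \<open>Cauchy's q-binomial theorem\<close>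

lemma qpoch_Suc: "qpoch z q (Suc n) = qpoch z q n * (1 - z * q ^ n)"
  by (simp add: qpoch_def)

lemma qpoch_self_nonzero:
  assumes "norm q < 1"
  shows "qpoch q q n \<noteq> 0"
proof -
  have "q * q ^ j \<noteq> 1" for j
    using norm_power_less_one[OF assms, of "Suc j"] by auto
  then show ?thesis
    by (simp add: qpoch_def)
qed

definition qbinomial :: "complex \<Rightarrow> nat \<Rightarrow> nat \<Rightarrow> complex" where
  "qbinomial q N k = (if k \<le> N then qpoch q q N / (qpoch q q k * qpoch q q (N - k)) else 0)"

lemma qbinomial_0: "norm q < 1 \<Longrightarrow> qbinomial q N 0 = 1"
  using qpoch_self_nonzero[of q N] by (simp add: qbinomial_def qpoch_def)

lemma qbinomial_eq_0: "N < k \<Longrightarrow> qbinomial q N k = 0"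
  by (simp add: qbinomial_def)

lemma qbinomial_Suc_Suc:
  assumes "norm q < 1"
  shows "qbinomial q (Suc N) (Suc k) = qbinomial q N (Suc k) + q ^ (N - k) * qbinomial q N k"
proof -
  note nz = qpoch_self_nonzero[OF assms]
  consider "N < k" | "k = N" | d where "N = k + Suc d"
    by (cases N k rule: linorder_cases) (auto dest: less_imp_Suc_add)
  then show ?thesis
  proof cases
    case 1
    then show ?thesis by (simp add: qbinomial_eq_0)
  next
    case 2
    then show ?thesis using nz by (simp add: qbinomial_def)
  next
    case 3
    have "qbinomial q (Suc N) (Suc k) = qpoch q q (Suc N) / (qpoch q q (Suc k) * qpoch q q (Suc d))"
      "qbinomial q N (Suc k) = qpoch q q N / (qpoch q q (Suc k) * qpoch q q d)"
      "qbinomial q N k = qpoch q q N / (qpoch q q k * qpoch q q (Suc d))"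
      "q ^ (N - k) = q ^ Suc d"
      using 3 by (simp_all add: qbinomial_def)
    moreover have "q * q ^ N = q ^ Suc k * q ^ Suc d"
      using 3 by (simp flip: power_add)
    moreover have "1 - q ^ Suc k \<noteq> 0" "1 - q ^ Suc d \<noteq> 0"
      using nz[of "Suc k"] nz[of "Suc d"] by (auto simp: qpoch_Suc)
    ultimately show ?thesis
      using nz[of N] nz[of k] nz[of d] unfolding qpoch_Suc
      by (simp only:) (simp add: divide_simps, simp add: algebra_simps)
  qed
qed

theorem qbinomial_theorem:
  assumes "norm q < 1"
  shows "(\<Prod>j<N. a + b * q ^ j) = (\<Sum>k\<le>N. qbinomial q N k * q ^ (k choose 2) * b ^ k * a ^ (N - k))"
proof (induction N)
  case 0
  then show ?case
    using qbinomial_0[OF assms] by (simp add: binomial_eq_0)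
next
  case (Suc N)
  define c where "c k = qbinomial q N k * q ^ (k choose 2) * b ^ k" for k
  have "(\<Prod>j<Suc N. a + b * q ^ j) = (\<Sum>k\<le>N. c k * a ^ (Suc N - k)) + (\<Sum>k\<le>N. c k * b * q ^ N * a ^ (N - k))"
    using Suc by (simp add: c_def algebra_simps sum_distrib_left Suc_diff_le sum.distrib)
  also have "(\<Sum>k\<le>N. c k * a ^ (Suc N - k)) = (\<Sum>k\<le>Suc N. c k * a ^ (Suc N - k))"
    by (simp add: c_def qbinomial_eq_0)
  also have "\<dots> = a ^ Suc N + (\<Sum>k\<le>N. c (Suc k) * a ^ (N - k))"
    by (subst sum.atMost_Suc_shift) (simp add: c_def qbinomial_0[OF assms] binomial_eq_0)
  also have "(\<Sum>k\<le>N. c k * b * q ^ N * a ^ (N - k))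
      = (\<Sum>k\<le>N. q ^ (N - k) * qbinomial q N k * q ^ (Suc k choose 2) * b ^ Suc k * a ^ (N - k))"
  proof (intro sum.cong refl)
    fix k assume "k \<in> {..N}"
    then have "q ^ N = q ^ (N - k) * q ^ k"
      by (simp flip: power_add)
    then show "c k * b * q ^ N * a ^ (N - k) =
        q ^ (N - k) * qbinomial q N k * q ^ (Suc k choose 2) * b ^ Suc k * a ^ (N - k)"
      by (simp add: c_def numeral_2_eq_2 power_add algebra_simps)
  qed
  also have "a ^ Suc N + (\<Sum>k\<le>N. c (Suc k) * a ^ (N - k))
      + (\<Sum>k\<le>N. q ^ (N - k) * qbinomial q N k * q ^ (Suc k choose 2) * b ^ Suc k * a ^ (N - k))
    = (\<Sum>k\<le>Suc N. qbinomial q (Suc N) k * q ^ (k choose 2) * b ^ k * a ^ (Suc N - k))"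
    by (subst sum.atMost_Suc_shift)
      (simp add: c_def qbinomial_0[OF assms] qbinomial_Suc_Suc[OF assms] binomial_eq_0
        algebra_simps sum.distrib)
  finally show ?case .
qed

section \<open>The Jacobi triple product identity\<close>

lemma choose_two_add: "(a + b) choose 2 = (a choose 2) + (b choose 2) + a * b"
  by (induction b) (simp_all add: numeral_2_eq_2 algebra_simps)

lemma choose_two_double: "2 * (n choose 2) + n = n * n"
  by (induction n) (simp_all add: numeral_2_eq_2 algebra_simps)

lemma (in comm_monoid_set) lessThan_add:
  fixes n m :: nat
  shows "F g {..<n + m} = F g {..<n} \<^bold>* F (\<lambda>i. g (n + i)) {..<m}"
  by (induction m) (simp_all add: assoc)

lemma choose_two_centre_upper:
  assumes "l \<le> n"
  shows "((n + l) choose 2) + n * (2*n - (n + l)) = (n choose 2) + n * n + (l choose 2)"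
proof -
  obtain d where "n = l + d"
    using assms le_Suc_ex by auto
  then show ?thesis
    unfolding choose_two_add by (simp add: algebra_simps)
qed

lemma choose_two_centre_lower:
  assumes "n = k + Suc l"
  shows "(k choose 2) + n * (2*n - k) = (n choose 2) + n * n + (Suc (Suc l) choose 2)"
  using choose_two_double[of l] unfolding assms choose_two_add by (simp add: numeral_2_eq_2 algebra_simps)

lemma prod_power_lessThan: "(\<Prod>j<n. (q::'a::comm_monoid_mult) ^ j) = q ^ (n choose 2)"
  by (induction n) (simp_all add: numeral_2_eq_2 power_add binomial_eq_0 mult.commute)

lemma qpoch_reflect_finite:
  assumes "x \<noteq> 0"
  shows "(\<Prod>j<n. q^n + x * q^j) = x^n * q^(n choose 2) * qpoch (-q/x) q n"
proof -
  have "(\<Prod>j<n. q^n + x * q^j) = (\<Prod>m<n. q^n + x * q^(n - Suc m))"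
    by (rule prod.nat_diff_reindex[symmetric])
  also have "\<dots> = (\<Prod>m<n. x * q^(n - Suc m) * (1 - (-q/x) * q^m))"
  proof (intro prod.cong refl)
    fix m assume "m \<in> {..<n}"
    then have "n = (n - Suc m) + Suc m"
      by simp
    then have "q^n = q^(n - Suc m) * q^Suc m"
      by (metis power_add)
    then show "q^n + x * q^(n - Suc m) = x * q^(n - Suc m) * (1 - (-q/x) * q^m)"
      using assms by (simp add: field_simps)
  qed
  also have "\<dots> = x^n * (\<Prod>m<n. q^(n - Suc m)) * qpoch (-q/x) q n"
    by (simp add: qpoch_def prod.distrib)
  also have "(\<Prod>m<n. q^(n - Suc m)) = q^(n choose 2)"
    using prod.nat_diff_reindex[of "\<lambda>j. q^j" n] by (simp add: prod_power_lessThan)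
  finally show ?thesis .
qed

lemma qpoch_shift_finite: "(\<Prod>j<n. q^n + x * q^(n + j)) = q^(n * n) * qpoch (-x) q n"
proof -
  have "(\<Prod>j<n. q^n + x * q^(n + j)) = (\<Prod>j<n. q^n * (1 - (-x) * q^j))"
    by (simp add: power_add algebra_simps)
  then show ?thesis
    by (simp add: qpoch_def prod.distrib power_mult)
qed

lemma qbinomial_theorem_centred:
  assumes "norm q < 1" and "x \<noteq> 0"
  shows "(\<Prod>j<2*n. q^n + x * q^j) = x^n * q^((n choose 2) + n * n)
    * ((\<Sum>l\<le>n. qbinomial q (2*n) (n + l) * (q^(l choose 2) * x^l))
      + (\<Sum>l<n. qbinomial q (2*n) (n - Suc l) * (q^(Suc (Suc l) choose 2) / x^Suc l)))"
proof -
  define C where "C = x^n * q^((n choose 2) + n * n)"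
  define g where "g k = qbinomial q (2*n) k * q^(k choose 2) * x^k * (q^n)^(2*n - k)" for k
  have "(\<Prod>j<2*n. q^n + x * q^j) = (\<Sum>k<n. g k) + (\<Sum>l\<le>n. g (n + l))"
  proof -
    have "{..2*n} = {..<n + Suc n}"
      by auto
    then show ?thesis
      unfolding g_def qbinomial_theorem[OF assms(1)]
      by (simp only: sum.lessThan_Suc_shift lessThan_Suc_atMost sum.lessThan_add)
  qed
  also have "(\<Sum>k<n. g k) = (\<Sum>l<n. g (n - Suc l))"
    by (rule sum.nat_diff_reindex[symmetric])
  also have "\<dots> = (\<Sum>l<n. C * (qbinomial q (2*n) (n - Suc l) * (q^(Suc (Suc l) choose 2) / x^Suc l)))"
  proof (intro sum.cong refl)
    fix l assume "l \<in> {..<n}"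
    then obtain k where n: "n = k + Suc l" and k: "k = n - Suc l"
      by auto
    have "q^(k choose 2) * (q^n)^(2*n - k) = q^((n choose 2) + n * n) * q^(Suc (Suc l) choose 2)"
      using choose_two_centre_lower[OF n] by (simp flip: power_mult power_add)
    moreover have "x^k = x^n / x^Suc l"
      using assms(2) unfolding n by (simp add: power_add)
    ultimately show "g (n - Suc l) = C * (qbinomial q (2*n) (n - Suc l) * (q^(Suc (Suc l) choose 2) / x^Suc l))"
      unfolding g_def C_def k[symmetric] by (simp add: ac_simps)
  qed
  also have "(\<Sum>l\<le>n. g (n + l)) = (\<Sum>l\<le>n. C * (qbinomial q (2*n) (n + l) * (q^(l choose 2) * x^l)))"
  proof (intro sum.cong refl)
    fix l assume "l \<in> {..n}"
    then have "q^((n + l) choose 2) * (q^n)^(2*n - (n + l)) = q^((n choose 2) + n * n) * q^(l choose 2)"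
      using choose_two_centre_upper[of l n] by (simp flip: power_mult power_add)
    then show "g (n + l) = C * (qbinomial q (2*n) (n + l) * (q^(l choose 2) * x^l))"
      unfolding g_def C_def by (simp add: power_add ac_simps)
  qed
  finally show ?thesis
    unfolding C_def by (simp add: sum_distrib_left algebra_simps)
qed

lemma jacobi_triple_product_finite:
  assumes q: "norm q < 1" "q \<noteq> 0" and x: "x \<noteq> 0"
  shows "qpoch (-q/x) q n * qpoch (-x) q n
    = (\<Sum>l\<le>n. qbinomial q (2*n) (n + l) * (q^(l choose 2) * x^l))
      + (\<Sum>l<n. qbinomial q (2*n) (n - Suc l) * (q^(Suc (Suc l) choose 2) / x^Suc l))"
proof -
  define C where "C = x^n * q^((n choose 2) + n * n)"
  have "C * (qpoch (-q/x) q n * qpoch (-x) q n) = (\<Prod>j<2*n. q^n + x * q^j)"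
    unfolding mult_2 prod.lessThan_add qpoch_reflect_finite[OF x] qpoch_shift_finite C_def
    by (simp add: power_add ac_simps)
  also have "\<dots> = C * ((\<Sum>l\<le>n. qbinomial q (2*n) (n + l) * (q^(l choose 2) * x^l))
      + (\<Sum>l<n. qbinomial q (2*n) (n - Suc l) * (q^(Suc (Suc l) choose 2) / x^Suc l)))"
    unfolding C_def by (rule qbinomial_theorem_centred[OF q(1) x])
  finally show ?thesis
    using mult_left_cancel[of C] q x by (simp add: C_def)
qed

lemma qbinomial_LIMSEQ:
  assumes "norm q < 1"
    and a: "filterlim a at_top sequentially" and b: "filterlim b at_top sequentially"
  shows "(\<lambda>n. qbinomial q (a n + b n) (a n)) \<longlonglongrightarrow> 1 / qpoch_inf q q"
proof -
  have ab: "filterlim (\<lambda>n. a n + b n) at_top sequentially"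
    by (rule filterlim_at_top_mono[OF a]) simp
  have "(\<lambda>n. qpoch q q (a n + b n) / (qpoch q q (a n) * qpoch q q (b n)))
      \<longlonglongrightarrow> qpoch_inf q q / (qpoch_inf q q * qpoch_inf q q)"
    using qpoch_inf_nonzero[OF assms(1,1)]
    by (intro tendsto_intros filterlim_compose[OF qpoch_LIMSEQ[OF assms(1)]] a b ab) simp
  then show ?thesis
    using qpoch_inf_nonzero[OF assms(1,1)] by (simp add: qbinomial_def)
qed

lemma qbinomial_centre_LIMSEQ:
  assumes "norm q < 1" and "\<And>n. n \<ge> m \<Longrightarrow> a n + b n = 2 * n"
    and "filterlim a at_top sequentially" "filterlim b at_top sequentially"
  shows "(\<lambda>n. qbinomial q (2 * n) (a n)) \<longlonglongrightarrow> 1 / qpoch_inf q q"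
proof (rule Lim_transform_eventually[OF qbinomial_LIMSEQ[OF assms(1,3,4)]])
  show "eventually (\<lambda>n. qbinomial q (a n + b n) (a n) = qbinomial q (2 * n) (a n)) sequentially"
    using eventually_ge_at_top[of m] by eventually_elim (simp add: assms(2))
qed

lemma qpoch_self_bounds:
  assumes "norm q < 1"
  obtains L U where "0 < L" and "\<And>n. L \<le> norm (qpoch q q n)" and "\<And>n. norm (qpoch q q n) \<le> U"
proof -
  define t where "t = norm q"
  have t: "0 \<le> t" "norm t < 1"
    using assms by (auto simp: t_def)
  have small: "t * t ^ j < 1" for j
    using t power_Suc_less_one[of t j] by (cases "t = 0") auto
  define U where "U = (\<Prod>j. 1 + t * t ^ j)"
  define L where "L = (\<Prod>j. 1 - t * t ^ j)"
  have U_prod: "(\<lambda>j. 1 + t * t ^ j) has_prod U" and L_prod: "(\<lambda>j. 1 - t * t ^ j) has_prod L"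
    unfolding U_def L_def using convergent_prod_one_minus_geometric[OF t(2), of "-t"]
      convergent_prod_one_minus_geometric[OF t(2), of t]
    by (simp_all add: convergent_prod_has_prod)
  have "0 < L"
    unfolding L_def using convergent_prod_one_minus_geometric[OF t(2)] small
    by (intro less_0_prodinf) auto
  moreover have "L \<le> norm (qpoch q q n)" for n
  proof -
    have "L \<le> (\<Prod>j<n. 1 - t * t ^ j)"
      unfolding L_def using t small by (intro prod_ge_prodinf[OF L_prod]) (auto simp: less_imp_le)
    also have "\<dots> \<le> norm (qpoch q q n)"
      unfolding qpoch_def prod_norm[symmetric] using small
      by (intro prod_mono) (auto simp: t_def norm_mult norm_power less_imp_le
          intro: order.trans[OF _ norm_triangle_ineq2])
    finally show ?thesis .
  qed
  moreover have "norm (qpoch q q n) \<le> U" for n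
  proof -
    have "norm (qpoch q q n) \<le> (\<Prod>j<n. 1 + t * t ^ j)"
      unfolding qpoch_def prod_norm[symmetric]
      by (intro prod_mono) (auto simp: t_def norm_mult norm_power intro: order.trans[OF norm_triangle_ineq4])
    also have "\<dots> \<le> U"
      unfolding U_def using t by (intro prod_le_prodinf[OF U_prod]) auto
    finally show ?thesis .
  qed
  ultimately show ?thesis
    using that by blast
qed

lemma qbinomial_bounded:
  assumes "norm q < 1"
  obtains B where "\<And>N k. norm (qbinomial q N k) \<le> B"
proof -
  obtain L U where L: "0 < L" "\<And>n. L \<le> norm (qpoch q q n)" and U: "\<And>n. norm (qpoch q q n) \<le> U"
    using qpoch_self_bounds[OF assms] by blast
  have "norm (qbinomial q N k) \<le> U / (L * L)" for N k
  proof (cases "k \<le> N")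
    case True
    then have "norm (qbinomial q N k) = norm (qpoch q q N) / (norm (qpoch q q k) * norm (qpoch q q (N - k)))"
      by (simp add: qbinomial_def norm_divide norm_mult)
    also have "\<dots> \<le> U / (L * L)"
      using L U by (intro frac_le mult_mono) (auto intro: order.trans[OF norm_ge_zero])
    finally show ?thesis .
  next
    case False
    then show ?thesis
      using L order.trans[OF norm_ge_zero U] by (simp add: qbinomial_def)
  qed
  then show ?thesis
    using that by blast
qed

lemma tendsto_weighted_finite_sums:
  fixes w :: "nat \<Rightarrow> nat \<Rightarrow> 'a::{real_normed_algebra,banach}"
  assumes lim: "\<And>k. (\<lambda>n. w k n) \<longlonglongrightarrow> L"
    and bound: "\<And>k n. norm (w k n) \<le> B"
    and summable: "summable (\<lambda>k. norm (c k))"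
    and finite: "\<And>n. finite (A n)"
    and exhaust: "\<And>k. eventually (\<lambda>n. k \<in> A n) sequentially"
  shows "(\<lambda>n. \<Sum>k\<in>A n. w k n * c k) \<longlonglongrightarrow> L * (\<Sum>k. c k)"
proof -
  define a where "a k n = (if k \<in> A n then w k n * c k else 0)" for k n
  have "0 \<le> B"
    using bound[of 0 0] norm_ge_zero order.trans by blast
  have "((\<lambda>n. \<Sum>k. a k n) \<longlongrightarrow> (\<Sum>k. L * c k)) sequentially"
  proof (rule tannerys_theorem[where M = "\<lambda>k. B * norm (c k)", THEN conjunct2, THEN conjunct2])
    fix k
    have "(\<lambda>n. w k n * c k) \<longlonglongrightarrow> L * c k"
      by (intro tendsto_intros lim)
    moreover have "eventually (\<lambda>n. w k n * c k = a k n) sequentially"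
      using exhaust[of k] by eventually_elim (simp add: a_def)
    ultimately show "(\<lambda>n. a k n) \<longlonglongrightarrow> L * c k"
      by (rule Lim_transform_eventually)
  next
    show "eventually (\<lambda>(k, n). norm (a k n) \<le> B * norm (c k)) (at_top \<times>\<^sub>F sequentially)"
      using \<open>0 \<le> B\<close> by (intro always_eventually allI)
        (auto simp: a_def intro!: order.trans[OF norm_mult_ineq] mult_right_mono bound)
  qed (use summable in simp_all)
  moreover have "(\<Sum>k. a k n) = (\<Sum>k\<in>A n. w k n * c k)" for n
    unfolding a_def by (rule sums_unique[symmetric], rule sums_If_finite_set, rule finite)
  moreover have "(\<Sum>k. L * c k) = L * (\<Sum>k. c k)"
    by (rule suminf_mult) (rule summable_norm_cancel[OF summable])
  ultimately show ?thesis
    by simp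
qed

lemma summable_power_choose_two:
  fixes t r :: real
  assumes "0 \<le> t" "t < 1" "0 \<le> r"
  shows "summable (\<lambda>l. t ^ ((l + c) choose 2) * r ^ l)"
proof -
  have "(\<lambda>l. t ^ l * r) \<longlonglongrightarrow> 0 * r"
    using assms by (intro tendsto_intros LIMSEQ_power_zero) simp
  then have "eventually (\<lambda>l. t ^ l * r < 1/2) sequentially"
    by (rule order_tendstoD) simp
  then obtain N where N: "\<And>l. l \<ge> N \<Longrightarrow> t ^ l * r < 1/2"
    by (auto simp: eventually_at_top_linorder)
  show ?thesis
  proof (rule summable_ratio_test[of "1/2" N])
    fix l assume "l \<ge> N"
    have "t ^ (l + c) \<le> t ^ l"
      using assms by (intro power_decreasing) auto
    then have "t ^ (l + c) * r \<le> 1/2"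
      using N[OF \<open>l \<ge> N\<close>] assms by (meson less_imp_le mult_right_mono order.trans)
    then have "(t ^ (l + c) * r) * (t ^ ((l + c) choose 2) * r ^ l) \<le> 1/2 * (t ^ ((l + c) choose 2) * r ^ l)"
      using assms by (intro mult_right_mono) simp_all
    moreover have "Suc l + c choose 2 = ((l + c) choose 2) + (l + c)"
      by (simp add: numeral_2_eq_2)
    ultimately show "norm (t ^ ((Suc l + c) choose 2) * r ^ Suc l) \<le> 1/2 * norm (t ^ ((l + c) choose 2) * r ^ l)"
      using assms by (simp add: power_add ac_simps)
  qed simp
qed

lemma summable_norm_theta_nonneg:
  fixes q x :: complex
  assumes "norm q < 1"
  shows "summable (\<lambda>l. norm (q^(l choose 2) * x^l))"
  using summable_power_choose_two[of "norm q" "norm x" 0] assms by (simp add: norm_mult norm_power)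

lemma summable_norm_theta_neg:
  fixes q x :: complex
  assumes "norm q < 1"
  shows "summable (\<lambda>l. norm (q^(Suc (Suc l) choose 2) / x^Suc l))"
proof -
  have "summable (\<lambda>l. 1 / norm x * (norm q ^ ((l + 2) choose 2) * (1 / norm x) ^ l))"
    using assms by (intro summable_mult summable_power_choose_two) simp_all
  then show ?thesis
    by (simp add: norm_divide norm_mult norm_power power_one_over field_simps)
qed

theorem jacobi_triple_product_series:
  assumes q: "norm q < 1" "q \<noteq> 0" and x: "x \<noteq> 0"
  shows "qpoch_inf (-q/x) q * qpoch_inf (-x) q * qpoch_inf q q
    = (\<Sum>l. q^(l choose 2) * x^l) + (\<Sum>l. q^(Suc (Suc l) choose 2) / x^Suc l)"
proof -
  define Q where "Q = qpoch_inf q q"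
  obtain B where B: "\<And>N k. norm (qbinomial q N k) \<le> B"
    using qbinomial_bounded[OF q(1)] by blast
  have "(\<lambda>n. \<Sum>l\<in>{..n}. qbinomial q (2*n) (n + l) * (q^(l choose 2) * x^l))
      \<longlonglongrightarrow> 1 / Q * (\<Sum>l. q^(l choose 2) * x^l)"
  proof (rule tendsto_weighted_finite_sums[OF _ B summable_norm_theta_nonneg[OF q(1)]])
    show "(\<lambda>n. qbinomial q (2*n) (n + l)) \<longlonglongrightarrow> 1 / Q" for l
      unfolding Q_def
      by (rule qbinomial_centre_LIMSEQ[OF q(1) _ filterlim_add_const_nat_at_top[of l]
            filterlim_minus_const_nat_at_top[of l], where m = l]) simp
  qed (auto simp: eventually_ge_at_top)
  moreover have "(\<lambda>n. \<Sum>l\<in>{..<n}. qbinomial q (2*n) (n - Suc l) * (q^(Suc (Suc l) choose 2) / x^Suc l))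
      \<longlonglongrightarrow> 1 / Q * (\<Sum>l. q^(Suc (Suc l) choose 2) / x^Suc l)"
  proof (rule tendsto_weighted_finite_sums[OF _ B summable_norm_theta_neg[OF q(1)]])
    show "(\<lambda>n. qbinomial q (2*n) (n - Suc l)) \<longlonglongrightarrow> 1 / Q" for l
      unfolding Q_def
      by (rule qbinomial_centre_LIMSEQ[OF q(1) _ filterlim_minus_const_nat_at_top[of "Suc l"]
            filterlim_add_const_nat_at_top[of "Suc l"], where m = "Suc l"]) simp
  qed (auto simp: eventually_gt_at_top)
  ultimately have "(\<lambda>n. qpoch (-q/x) q n * qpoch (-x) q n)
      \<longlonglongrightarrow> 1 / Q * (\<Sum>l. q^(l choose 2) * x^l) + 1 / Q * (\<Sum>l. q^(Suc (Suc l) choose 2) / x^Suc l)"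
    unfolding jacobi_triple_product_finite[OF q x] by (rule tendsto_add)
  moreover have "(\<lambda>n. qpoch (-q/x) q n * qpoch (-x) q n) \<longlonglongrightarrow> qpoch_inf (-q/x) q * qpoch_inf (-x) q"
    by (intro tendsto_mult qpoch_LIMSEQ q)
  moreover have "Q \<noteq> 0"
    unfolding Q_def by (rule qpoch_inf_nonzero[OF q(1) q(1)])
  ultimately show ?thesis
    unfolding Q_def[symmetric] by (auto dest: LIMSEQ_unique simp: field_simps)
qed

definition theta_term :: "complex \<Rightarrow> complex \<Rightarrow> int \<Rightarrow> complex" where
  "theta_term q x n = q powi (n * (n - 1) div 2) * x powi n"

lemma int_choose_two: "int (l choose 2) = int l * (int l - 1) div 2"
  by (induction l) (simp_all add: numeral_2_eq_2 algebra_simps)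

lemma theta_term_of_nat: "theta_term q x (int l) = q^(l choose 2) * x^l"
  by (simp add: theta_term_def int_choose_two[symmetric])

lemma theta_term_neg: "theta_term q x (- int l - 1) = q^(Suc (Suc l) choose 2) / x^Suc l"
proof -
  have "(- int l - 1) * (- int l - 1 - 1) div 2 = int (Suc (Suc l) choose 2)"
    unfolding int_choose_two by (simp add: algebra_simps)
  moreover have "x powi (- int l - 1) = 1 / x^Suc l"
    by (metis power_int_minus power_int_of_nat inverse_eq_divide minus_diff_eq of_nat_Suc diff_minus_eq_add add.commute)
  ultimately show ?thesis
    by (simp add: theta_term_def)
qed

lemma range_int_Un_range_negative: "range int \<union> range (\<lambda>l. - int l - 1) = (UNIV :: int set)"
proof -
  have "n \<in> range int \<union> range (\<lambda>l. - int l - 1)" for n :: int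
  proof (cases "n \<ge> 0")
    case True
    then show ?thesis by (metis UnI1 nonneg_int_cases rangeI)
  next
    case False
    then have "n = - int (nat (- n - 1)) - 1" by simp
    then show ?thesis by (metis UnI2 rangeI)
  qed
  then show ?thesis
    by blast
qed

theorem jacobi_triple_product:
  assumes "norm q < 1" "q \<noteq> 0" "x \<noteq> 0"
  shows "(theta_term q x has_sum qtheta_inf (-x) q * qpoch_inf q q) UNIV"
proof -
  define S1 S2 where "S1 = (\<Sum>l. q^(l choose 2) * x^l)" and "S2 = (\<Sum>l. q^(Suc (Suc l) choose 2) / x^Suc l)"
  have "((theta_term q x \<circ> int) has_sum S1) UNIV"
    using summable_norm_theta_nonneg[OF assms(1), of x] unfolding S1_def o_def theta_term_of_nat
    by (intro norm_summable_imp_has_sum summable_sums[OF summable_norm_cancel])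
  then have nonneg: "(theta_term q x has_sum S1) (range int)"
    by (subst has_sum_reindex) auto
  have "((theta_term q x \<circ> (\<lambda>l. - int l - 1)) has_sum S2) UNIV"
    using summable_norm_theta_neg[OF assms(1), of x] unfolding S2_def o_def theta_term_neg
    by (intro norm_summable_imp_has_sum summable_sums[OF summable_norm_cancel])
  then have neg: "(theta_term q x has_sum S2) (range (\<lambda>l. - int l - 1))"
    by (subst has_sum_reindex) (auto simp: inj_on_def)
  have "(theta_term q x has_sum (S1 + S2)) (range int \<union> range (\<lambda>l. - int l - 1))"
    by (rule has_sum_Un_disjoint[OF nonneg neg]) auto
  moreover note range_int_Un_range_negative
  moreover have "qtheta_inf (-x) q * qpoch_inf q q = S1 + S2"
    using jacobi_triple_product_series[OF assms] unfolding S1_def S2_def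
    by (simp add: qtheta_inf_def ac_simps)
  ultimately show ?thesis
    by simp
qed

section \<open>Dissection of the triple product by residue classes\<close>

lemma has_sum_residue_classes:
  fixes f :: "int \<Rightarrow> 'a::topological_comm_monoid_add"
  assumes "0 < k" and classes: "\<And>r. r \<in> {a..<a + k} \<Longrightarrow> ((\<lambda>m. f (k * m + r)) has_sum s r) UNIV"
  shows "(f has_sum (\<Sum>r\<in>{a..<a + k}. s r)) UNIV"
proof -
  have residue: "(k * m + r - a) mod k = r - a" if "r \<in> {a..<a + k}" for m r
  proof -
    have "(k * m + r - a) mod k = (r - a + k * m) mod k"
      by (simp add: algebra_simps)
    with that show ?thesis
      by (simp only: mod_mult_self2) (simp add: mod_pos_pos_trivial)
  qed
  have "(f has_sum (\<Sum>r\<in>{a..<a + k}. s r)) (\<Union>r\<in>{a..<a + k}. range (\<lambda>m. k * m + r))"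
  proof (rule sum_has_sum)
    fix r assume "r \<in> {a..<a + k}"
    then show "(f has_sum s r) (range (\<lambda>m. k * m + r))"
      using classes \<open>0 < k\<close> by (subst has_sum_reindex) (auto simp: inj_on_def o_def)
  next
    fix r r' assume "r \<in> {a..<a + k}" "r' \<in> {a..<a + k}" "r \<noteq> r'"
    then show "range (\<lambda>m. k * m + r) \<inter> range (\<lambda>m. k * m + r') = {}"
      using residue by (auto simp: image_iff) (metis add.commute diff_add_cancel)
  qed simp
  moreover have "n \<in> (\<Union>r\<in>{a..<a + k}. range (\<lambda>m. k * m + r))" for n
  proof -
    have "n = k * ((n - a) div k) + (a + (n - a) mod k)"
      by simp
    moreover have "a + (n - a) mod k \<in> {a..<a + k}"
      using \<open>0 < k\<close> by simp
    ultimately show ?thesis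
      by blast
  qed
  ultimately show ?thesis
    by (metis UNIV_eq_I)
qed

lemma theta_term_dissect:
  assumes "q \<noteq> 0" and "x \<noteq> 0"
  shows "theta_term q x (int k * m + r)
    = theta_term q x r * theta_term (q^(k^2)) (q powi (int (k choose 2) + int k * r) * x^k) m"
proof -
  define n where "n = int k * m + r"
  define M R K where "M = m * (m - 1) div 2" and "R = r * (r - 1) div 2" and "K = int (k choose 2)"
  have "m * (m - 1) = 2 * M" "r * (r - 1) = 2 * R" "int k * (int k - 1) = 2 * K"
    by (simp_all add: M_def R_def K_def int_choose_two)
  then have "n * (n - 1) = 2 * (int (k^2) * M + (K + int k * r) * m + R)"
    unfolding n_def by (simp add: power2_eq_square) algebra
  then have "n * (n - 1) div 2 = R + int (k^2) * M + (K + int k * r) * m"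
    by (simp add: algebra_simps)
  then have "q powi (n * (n - 1) div 2) = q powi R * (q^(k^2)) powi M * (q powi (K + int k * r)) powi m"
    using assms(1) by (simp add: power_int_add power_int_mult flip: power_int_of_nat)
  moreover have "x powi n = x powi r * (x^k) powi m"
    using assms(2) by (simp add: n_def power_int_add power_int_power)
  ultimately show ?thesis
    unfolding theta_term_def n_def[symmetric] M_def[symmetric] R_def[symmetric] K_def[symmetric]
    by (simp only: power_int_mult_distrib) (simp add: ac_simps)
qed

theorem jacobi_triple_product_dissect:
  assumes "norm q < 1" "q \<noteq> 0" "x \<noteq> 0" "0 < k"
  shows "qtheta_inf (-x) q * qpoch_inf q q
    = (\<Sum>r\<in>{a..<a + int k}. theta_term q x r
        * (qtheta_inf (- (q powi (int (k choose 2) + int k * r) * x^k)) (q^(k^2)) * qpoch_inf (q^(k^2)) (q^(k^2))))"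
proof -
  define y where "y r = q powi (int (k choose 2) + int k * r) * x^k" for r
  have "(theta_term q x has_sum (\<Sum>r\<in>{a..<a + int k}. theta_term q x r
        * (qtheta_inf (- y r) (q^(k^2)) * qpoch_inf (q^(k^2)) (q^(k^2))))) UNIV"
  proof (rule has_sum_residue_classes)
    fix r
    have "(theta_term (q^(k^2)) (y r) has_sum qtheta_inf (- y r) (q^(k^2)) * qpoch_inf (q^(k^2)) (q^(k^2))) UNIV"
      using assms by (intro jacobi_triple_product) (simp_all add: y_def norm_power_less_one)
    then show "((\<lambda>m. theta_term q x (int k * m + r)) has_sum
        theta_term q x r * (qtheta_inf (- y r) (q^(k^2)) * qpoch_inf (q^(k^2)) (q^(k^2)))) UNIV"
      unfolding theta_term_dissect[OF assms(2,3)] y_def by (rule has_sum_cmult_right)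
  qed (use assms in simp)
  then show ?thesis
    using jacobi_triple_product[OF assms(1-3)] has_sum_unique unfolding y_def by blast
qed

lemma int_interval_minus2_3: "{-2..<3::int} = {-2, -1, 0, 1, 2}"
  by auto

lemma ramanujan_psi_dissect5:
  assumes "norm q < 1" "q \<noteq> 0"
  shows "qpoch_inf (q^2) (q^2) / qpoch_inf q (q^2)
    = qpoch_inf (q^25) (q^25) * qtheta_inf (q^20) (q^50) / qtheta_inf (q^10) (q^25)
      + q * qpoch_inf (q^25) (q^25) * qtheta_inf (q^10) (q^50) / qtheta_inf (q^5) (q^25)
      + q^3 * qpoch_inf (q^50) (q^50) / qpoch_inf (q^25) (q^50)"
proof -
  define P T where "P = qpoch_inf (q^25) (q^25)" and "T e = qtheta_inf (- (q^e)) (q^25)" for e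
  have "q^3 * inverse (q^2) = q"
    using assms(2) by (simp add: eval_nat_numeral field_simps)
  then have dissect: "qtheta_inf (-q) q * qpoch_inf q q
      = q * (T 5 * P) + (T 10 * P + (T 15 * P + (q * (T 20 * P) + q * q^2 * (T 25 * P))))"
    using jacobi_triple_product_dissect[OF assms assms(2), of 5 "-2"] assms
    by (simp add: int_interval_minus2_3 theta_term_def choose_two power_int_minus P_def T_def)
  have reflect: "T 15 = T 10" "T 20 = T 5"
    using qtheta_inf_reflect[of "q^25" "- (q^10)"] qtheta_inf_reflect[of "q^25" "- (q^5)"] assms(2)
    by (simp_all add: T_def flip: power_diff)
  have psi25: "T 25 * P = 2 * (qpoch_inf (q^50) (q^50) / qpoch_inf (q^25) (q^50))"
    using ramanujan_psi_eq_qtheta[of "q^25"] assms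
    by (simp add: T_def P_def norm_power_less_one flip: power_mult)
  have q25: "norm (q^25) < 1"
    using assms(1) by (simp add: norm_power_less_one)
  have "qtheta_inf (q^10) (q^25) \<noteq> 0" "qtheta_inf (q^5) (q^25) \<noteq> 0"
    using assms by (intro qtheta_inf_nonzero; simp add: norm_power_less_one flip: power_diff)+
  then have minus: "T 10 = qtheta_inf (q^20) (q^50) / qtheta_inf (q^10) (q^25)"
    "T 5 = qtheta_inf (q^10) (q^50) / qtheta_inf (q^5) (q^25)"
    unfolding T_def by (simp_all add: qtheta_inf_minus[OF q25] flip: power_mult)
  have "2 * (qpoch_inf (q^2) (q^2) / qpoch_inf q (q^2))
      = 2 * (P * T 10 + q * P * T 5 + q^3 * (qpoch_inf (q^50) (q^50) / qpoch_inf (q^25) (q^50)))"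
    unfolding ramanujan_psi_eq_qtheta[OF assms] dissect reflect psi25
    by (simp add: algebra_simps power2_eq_square power3_eq_cube)
  then have "qpoch_inf (q^2) (q^2) / qpoch_inf q (q^2)
      = P * T 10 + q * P * T 5 + q^3 * (qpoch_inf (q^50) (q^50) / qpoch_inf (q^25) (q^50))"
    by (simp only: mult_cancel_left) simp
  then show ?thesis
    unfolding minus P_def by (simp only: times_divide_eq_right)
qed

lemma qpoch_inf_fifth_root_dissect5:
  assumes "norm q < 1" "q \<noteq> 0" "\<zeta>^5 = 1" "\<zeta> \<noteq> 1"
  shows "qpoch_inf (\<zeta>^2 * q^2) (q^2) * qpoch_inf (\<zeta>^3 * q^2) (q^2) * qpoch_inf (q^2) (q^2)
    = (qtheta_inf (q^20) (q^50) + (\<zeta> + \<zeta>^4) * q^2 * qtheta_inf (q^10) (q^50)) * qpoch_inf (q^50) (q^50)"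
proof -
  define P T where "P = qpoch_inf (q^50) (q^50)" and "T e = qtheta_inf (q^e) (q^50)" for e
  have z: "\<zeta> \<noteq> 0" "(- (\<zeta>^2))^5 = -1" "inverse (\<zeta>^2) = \<zeta>^3"
    using assms(3) power_mult[of \<zeta> 5 2] by (auto simp: power_mult_distrib inverse_unique simp flip: power_mult power_add)
  have "1 - \<zeta>^2 \<noteq> 0"
  proof
    assume "1 - \<zeta>^2 = 0"
    then have "\<zeta>^5 = \<zeta>"
      by (simp add: eval_nat_numeral algebra_simps)
    with assms(3,4) show False
      by simp
  qed
  have dissect: "qtheta_inf (\<zeta>^2) (q^2) * qpoch_inf (q^2) (q^2)
      = T 20 * P + (q^2 * \<zeta>^4 * (T 40 * P) - \<zeta>^2 * (T 30 * P)) - q^2 * \<zeta>^3 * (T 10 * P)"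
    using jacobi_triple_product_dissect[of "q^2" "- (\<zeta>^2)" 5 "-2"] assms z
    by (simp add: int_interval_minus2_3 theta_term_def choose_two power_int_minus norm_power_less_one
        qtheta_inf_one P_def T_def flip: power_mult)
  have reflect: "T 30 = T 20" "T 40 = T 10"
    using qtheta_inf_reflect[of "q^50" "q^20"] qtheta_inf_reflect[of "q^50" "q^10"] assms(2)
    by (simp_all add: T_def flip: power_diff)
  have shift: "qtheta_inf (\<zeta>^2) (q^2) = (1 - \<zeta>^2) * (qpoch_inf (\<zeta>^2 * q^2) (q^2) * qpoch_inf (\<zeta>^3 * q^2) (q^2))"
    using qpoch_inf_shift[of "q^2" "\<zeta>^2"] assms z(3)
    by (simp add: qtheta_inf_def norm_power_less_one divide_inverse ac_simps)
  have unit: "\<zeta>^4 - \<zeta>^3 = (\<zeta> + \<zeta>^4) * (1 - \<zeta>^2)"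
    using assms(3) by algebra
  have "(1 - \<zeta>^2) * (qpoch_inf (\<zeta>^2 * q^2) (q^2) * qpoch_inf (\<zeta>^3 * q^2) (q^2) * qpoch_inf (q^2) (q^2))
      = qtheta_inf (\<zeta>^2) (q^2) * qpoch_inf (q^2) (q^2)"
    unfolding shift by (simp add: ac_simps)
  also have "\<dots> = (1 - \<zeta>^2) * (T 20 * P) + (\<zeta>^4 - \<zeta>^3) * q^2 * (T 10 * P)"
    unfolding dissect reflect by (simp add: algebra_simps)
  also have "\<dots> = (1 - \<zeta>^2) * ((T 20 + (\<zeta> + \<zeta>^4) * q^2 * T 10) * P)"
    unfolding unit by (simp add: algebra_simps)
  finally show ?thesis
    using \<open>1 - \<zeta>^2 \<noteq> 0\<close> unfolding P_def T_def by simp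
qed

lemma qpoch_inf_fifth_root_pair_reciprocal:
  assumes "norm q < 1" "q \<noteq> 0" "\<zeta>^5 = 1" "\<zeta> \<noteq> 1"
  shows "1 / (qpoch_inf (\<zeta> * q^2) (q^2) * qpoch_inf (inverse \<zeta> * q^2) (q^2))
    = 1 / qtheta_inf (q^10) (q^50) + (\<zeta> + \<zeta>^4) * q^2 / qtheta_inf (q^20) (q^50)"
proof -
  define Z where "Z = qpoch_inf (\<zeta> * q^2) (q^2) * qpoch_inf (inverse \<zeta> * q^2) (q^2)"
  define T P where "T e = qtheta_inf (q^e) (q^50)" and "P = qpoch_inf (q^50) (q^50)" for e
  have q2: "norm (q^2) < 1" and q10: "norm (q^10) < 1"
    using assms(1) by (simp_all add: norm_power_less_one)
  have "inverse \<zeta> = \<zeta>^4"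
    using assms(3) by (intro inverse_unique) (simp flip: power_Suc)
  then have "Z * (qpoch_inf (\<zeta>^2 * q^2) (q^2) * qpoch_inf (\<zeta>^3 * q^2) (q^2) * qpoch_inf (q^2) (q^2))
      = qpoch_inf (q^10) (q^10)"
    using qpoch_inf_fifth_roots[OF q2 assms(3,4), of "q^2"]
    by (simp add: Z_def numeral_eq_Suc ac_simps flip: power_mult)
  also have "\<dots> = T 10 * T 20 * P"
    using qpoch_inf_self_dissect5[OF q10] assms(2) by (simp add: T_def P_def flip: power_mult)
  finally have Z: "Z * ((T 20 + (\<zeta> + \<zeta>^4) * q^2 * T 10) * P) = T 10 * T 20 * P"
    unfolding qpoch_inf_fifth_root_dissect5[OF assms] T_def P_def .
  have "T 10 * T 20 * P \<noteq> 0"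
    using \<open>qpoch_inf (q^10) (q^10) = T 10 * T 20 * P\<close> qpoch_inf_nonzero[OF q10 q10] by simp
  moreover from this Z have "Z \<noteq> 0"
    by auto
  ultimately have "1 / Z = (T 20 + (\<zeta> + \<zeta>^4) * q^2 * T 10) * P / (T 10 * T 20 * P)"
    using Z by (simp add: field_simps)
  also have "\<dots> = 1 / T 10 + (\<zeta> + \<zeta>^4) * q^2 / T 20"
    using \<open>T 10 * T 20 * P \<noteq> 0\<close> by (simp add: field_simps)
  finally show ?thesis
    unfolding Z_def T_def .
qed

theorem proposition6p1:
  fixes q \<zeta> :: complex
  assumes "norm q < 1"
    and "\<zeta> ^ 5 = 1" and "\<zeta> \<noteq> 1"
  shows "qpoch_inf (q^2) (q^2) /
           (qpoch_inf q (q^2) * qpoch_inf (\<zeta> * q^2) (q^2) * qpoch_inf (inverse \<zeta> * q^2) (q^2))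
       = qpoch_inf (q^25) (q^25) * qtheta_inf (q^20) (q^50)
           / (qtheta_inf (q^10) (q^25) * qtheta_inf (q^10) (q^50))
         + (\<zeta> + \<zeta>^4) * q^5 * qpoch_inf (q^50) (q^50)
           / (qpoch_inf (q^25) (q^50) * qtheta_inf (q^20) (q^50))
         + q * qpoch_inf (q^25) (q^25) / qtheta_inf (q^5) (q^25)
         + (\<zeta> + \<zeta>^4) * q^2 * qpoch_inf (q^25) (q^25) / qtheta_inf (q^10) (q^25)
         + (\<zeta> + \<zeta>^4) * q^3 * qpoch_inf (q^25) (q^25) * qtheta_inf (q^10) (q^50)
           / (qtheta_inf (q^5) (q^25) * qtheta_inf (q^20) (q^50))
         + q^3 * qpoch_inf (q^50) (q^50)
           / (qpoch_inf (q^25) (q^50) * qtheta_inf (q^10) (q^50))"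
proof (cases "q = 0")
  case True
  then show ?thesis
    by (simp add: qpoch_inf_zero_base qtheta_inf_def)
next
  case False
  have expand: "(P * A / B + q * P * C / D + q^3 * Q / R) * (1 / C + c * q^2 / A)
      = P * A / (B * C) + c * q^5 * Q / (R * A) + q * P / D + c * q^2 * P / B
        + c * q^3 * P * C / (D * A) + q^3 * Q / (R * C)"
    if "A \<noteq> 0" "C \<noteq> 0" for P A B C D Q R c :: complex
  proof -
    have "q * q^2 = q^3" "q^3 * q^2 = q^5"
      by (simp_all flip: power_Suc power_add)
    with that show ?thesis
      by (simp add: ring_distribs times_divide_times_eq ac_simps)
  qed
  have split: "x / (y * z * w) = x / y * (1 / (z * w))" for x y z w :: complex
    by (simp add: mult.assoc)
  have nz: "qtheta_inf (q^20) (q^50) \<noteq> 0" "qtheta_inf (q^10) (q^50) \<noteq> 0"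
    using assms(1) False by (intro qtheta_inf_nonzero; simp add: norm_power_less_one flip: power_diff)+
  show ?thesis
    unfolding split ramanujan_psi_dissect5[OF assms(1) False]
      qpoch_inf_fifth_root_pair_reciprocal[OF assms(1) False assms(2,3)] expand[OF nz] ..
qed

end
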